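(* Fix $n,d$ and $J\subseteq[n]$ with $|J|=\ell$ such that $\ell\le d<n-\ell$. Then there is a bijection \[ \{C\in\mathcal{P}(n,d):\mathrm{st}(C)=J\}\longleftrightarrow\{C'\in\mathcal{P}(n,d+1):\mathrm{st}(C')=J\}. \]
   Context: $\mathcal{P}(n,d)$ is the set of words $C=C_1\cdots C_n$ in letters $\mathbf{e}$ (east step) and $\mathbf{n}$ (north step) with exactly $d$ letters $\mathbf{e}$. Scan positions left to right and mark position $i$ with $C_i=\mathbf{e}$ if the number of $j<i$ with $C_j=\mathbf{n}$ equals the number of $j<i$ with $C_j=\mathbf{e}$ that are unmarked; $\mathrm{st}(C)$ is the set of unmarked positions $i$ with $C_i=\mathbf{e}$. *)

theory Defs
  imports Main
begin

text \<open>Letters: E = east step, N = north step. Words are lists; positions are 1-indexed.\<close>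
datatype step = E | N

definition Pnd :: "nat \<Rightarrow> nat \<Rightarrow> step list set" where
  "Pnd n d = {C. length C = n \<and> length (filter (\<lambda>x. x = E) C) = d}"

text \<open>Scan: i = current position, a = number of N's before i,
  b = number of unmarked E's before i. An E at position i is marked iff a = b;
  the result is the set of unmarked E positions.\<close>
fun st_aux :: "step list \<Rightarrow> nat \<Rightarrow> nat \<Rightarrow> nat \<Rightarrow> nat set" where
  "st_aux [] i a b = {}"
| "st_aux (N # cs) i a b = st_aux cs (Suc i) (Suc a) b"
| "st_aux (E # cs) i a b =
     (if a = b then st_aux cs (Suc i) a b else insert i (st_aux cs (Suc i) a (Suc b)))"

definition st :: "step list \<Rightarrow> nat set" where
  "st C = st_aux C 1 0 0"

end

theory Submission
  imports Defs
begin

(* Read the scan as a walk whose height is the number of N's minus the number of unmarked E's: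
   N goes up, an E goes down unless the walk is on the ground, where it is marked and the walk
   stays at height 0 (a flat step).  Then st C is the set of positions of the down steps, and
   final height + |st C| + #E = n.
   A word with d E's and |st C| < n - d ends above the ground, so it splits uniquely at its last
   up step from height 0 as xs N ys, where xs ends on the ground and ys never makes a flat step.
   A word with d + 1 > |st C| E's must contain a flat step and splits uniquely at the last one as
   xs E ys, with xs and ys of the same kind.  Shifting a walk without flat steps up by one level
   does not change its down steps, so both splittings preserve st, and exchanging the letter at
   the splitting point is the bijection. *)

fun st_from :: "step list \<Rightarrow> nat \<Rightarrow> nat \<Rightarrow> nat set" where
  "st_from [] i h = {}"
| "st_from (N # cs) i h = st_from cs (Suc i) (Suc h)"
| "st_from (E # cs) i h =
     (if h = 0 then st_from cs (Suc i) 0 else insert i (st_from cs (Suc i) (h - 1)))"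

fun height :: "step list \<Rightarrow> nat \<Rightarrow> nat" where
  "height [] h = h"
| "height (N # cs) h = height cs (Suc h)"
| "height (E # cs) h = height cs (h - 1)"

fun no_flat_step :: "step list \<Rightarrow> nat \<Rightarrow> bool" where
  "no_flat_step [] h = True"
| "no_flat_step (N # cs) h = no_flat_step cs (Suc h)"
| "no_flat_step (E # cs) h = (0 < h \<and> no_flat_step cs (h - 1))"

abbreviation count_E :: "step list \<Rightarrow> nat" where
  "count_E cs \<equiv> length (filter (\<lambda>x. x = E) cs)"

lemma st_aux_eq_st_from: "b \<le> a \<Longrightarrow> st_aux cs i a b = st_from cs i (a - b)"
  by (induction cs i a b rule: st_aux.induct) (auto simp: Suc_diff_le)

lemma st_eq_st_from: "st cs = st_from cs 1 0"
  by (simp add: st_def st_aux_eq_st_from)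

lemma st_from_subset: "st_from cs i h \<subseteq> {i..<i + length cs}"
proof -
  have "x \<in> st_from cs i h \<Longrightarrow> i \<le> x \<and> x < i + length cs" for x
    by (induction cs i h rule: st_from.induct) (auto split: if_splits)
  then show ?thesis by auto
qed

lemma finite_st_from: "finite (st_from cs i h)"
  by (rule finite_subset[OF st_from_subset]) simp

lemma st_from_append: "st_from (xs @ ys) i h = st_from xs i h \<union> st_from ys (i + length xs) (height xs h)"
  by (induction xs i h rule: st_from.induct) auto

lemma height_append: "height (xs @ ys) h = height ys (height xs h)"
  by (induction xs h rule: height.induct) auto

lemma no_flat_step_append: "no_flat_step (xs @ ys) h \<longleftrightarrow> no_flat_step xs h \<and> no_flat_step ys (height xs h)"
  by (induction xs h rule: no_flat_step.induct) auto

lemma st_from_Suc: "no_flat_step cs h \<Longrightarrow> st_from cs i (Suc h) = st_from cs i h"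
proof (induction cs i h rule: st_from.induct)
  case (3 cs i h)
  then show ?case by (cases h) auto
qed auto

lemma height_Suc: "no_flat_step cs h \<Longrightarrow> height cs (Suc h) = Suc (height cs h)"
  by (induction cs h rule: height.induct) (auto simp: Suc_diff_Suc)

lemma notin_st_from_Suc: "i \<notin> st_from cs (Suc i) h"
  using st_from_subset by fastforce

lemma height_add_card_st_from: "height cs h + card (st_from cs i h) + count_E cs = h + length cs"
proof (induction cs i h rule: st_from.induct)
  case (3 cs i h)
  then show ?case by (cases h) (simp_all add: finite_st_from notin_st_from_Suc)
qed auto

lemma card_st_from_no_flat_step: "no_flat_step cs h \<Longrightarrow> card (st_from cs i h) = count_E cs"
proof (induction cs i h rule: st_from.induct)
  case (3 cs i h)
  then show ?case by (cases h) (simp_all add: finite_st_from notin_st_from_Suc)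
qed auto

lemma split_at_last_up_step_from_ground:
  assumes "0 < height cs 0"
  obtains xs ys where "cs = xs @ N # ys" "height xs 0 = 0" "no_flat_step ys 0"
  using assms
proof (induction cs arbitrary: thesis rule: rev_induct)
  case (snoc c cs)
  show ?case
  proof (cases "c = N \<and> height cs 0 = 0")
    case True
    then show ?thesis using snoc.prems(1)[of cs "[]"] by simp
  next
    case False
    with snoc.prems(2) have "0 < height cs 0"
      by (cases c) (simp_all add: height_append)
    then obtain xs ys where split: "cs = xs @ N # ys" "height xs 0 = 0" "no_flat_step ys 0"
      using snoc.IH by blast
    then have "height cs 0 = Suc (height ys 0)"
      by (simp add: height_append height_Suc)
    with snoc.prems(2) split(3) have "no_flat_step (ys @ [c]) 0"
      by (cases c) (simp_all add: no_flat_step_append height_append)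
    then show ?thesis using snoc.prems(1)[of xs "ys @ [c]"] split(1,2) by simp
  qed
qed simp

lemma split_at_last_flat_step:
  assumes "\<not> no_flat_step cs h"
  obtains xs ys where "cs = xs @ E # ys" "height xs h = 0" "no_flat_step ys 0"
  using assms
proof (induction cs arbitrary: thesis rule: rev_induct)
  case (snoc c cs)
  show ?case
  proof (cases "c = E \<and> height cs h = 0")
    case True
    then show ?thesis using snoc.prems(1)[of cs "[]"] by simp
  next
    case False
    with snoc.prems(2) have "\<not> no_flat_step cs h"
      by (cases c) (auto simp: no_flat_step_append)
    then obtain xs ys where split: "cs = xs @ E # ys" "height xs h = 0" "no_flat_step ys 0"
      using snoc.IH by blast
    then have "height cs h = height ys 0"
      by (simp add: height_append)
    with False split(3) have "no_flat_step (ys @ [c]) 0"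
      by (cases c) (simp_all add: no_flat_step_append)
    then show ?thesis using snoc.prems(1)[of xs "ys @ [c]"] split(1,2) by simp
  qed
qed simp

lemma ground_not_revisited:
  assumes "height xs 0 = 0" "no_flat_step (zs @ c # ys) 0"
  shows "height (xs @ c # zs) 0 \<noteq> 0"
proof -
  have zs: "no_flat_step zs 0" and c: "no_flat_step (c # ys) (height zs 0)"
    using assms(2) by (simp_all add: no_flat_step_append)
  show ?thesis
    using assms(1) height_Suc[OF zs] c by (cases c) (simp_all add: height_append)
qed

lemma split_at_ground_unique:
  assumes "xs @ c # ys = xs' @ c # ys'"
    and "height xs 0 = 0" "no_flat_step ys 0" "height xs' 0 = 0" "no_flat_step ys' 0"
  shows "xs = xs' \<and> ys = ys'"
proof -
  from assms(1) obtain us where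
    "xs = xs' @ us \<and> us @ c # ys = c # ys' \<or> xs @ us = xs' \<and> c # ys = us @ c # ys'"
    by (auto simp: append_eq_append_conv2)
  then show ?thesis
  proof
    assume "xs = xs' @ us \<and> us @ c # ys = c # ys'"
    then show ?thesis
      using ground_not_revisited[of xs' "tl us" c ys] assms(2,4,5) by (cases us) auto
  next
    assume "xs @ us = xs' \<and> c # ys = us @ c # ys'"
    then show ?thesis
      using ground_not_revisited[of xs "tl us" c ys'] assms(2,3,4) by (cases us) auto
  qed
qed

lemma inj_on_insert_at_ground:
  "inj_on (\<lambda>(xs, ys). xs @ c # ys) {(xs, ys). height xs 0 = 0 \<and> no_flat_step ys 0}"
proof (rule inj_onI, clarsimp)
  fix xs ys xs' ys'
  assume "height xs 0 = 0" "no_flat_step ys 0" "height xs' 0 = 0" "no_flat_step ys' 0"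
    and "xs @ c # ys = xs' @ c # ys'"
  then show "xs = xs' \<and> ys = ys'"
    using split_at_ground_unique by blast
qed

lemma st_insert_N_at_ground:
  assumes "height xs 0 = 0" "no_flat_step ys 0"
  shows "st (xs @ N # ys) = st_from xs 1 0 \<union> st_from ys (length xs + 2) 0"
  using assms by (simp add: st_eq_st_from st_from_append st_from_Suc)

lemma st_insert_E_at_ground:
  assumes "height xs 0 = 0"
  shows "st (xs @ E # ys) = st_from xs 1 0 \<union> st_from ys (length xs + 2) 0"
  using assms by (simp add: st_eq_st_from st_from_append)

definition ground_splits :: "nat \<Rightarrow> nat \<Rightarrow> nat set \<Rightarrow> (step list \<times> step list) set" where
  "ground_splits n d J = {(xs, ys). height xs 0 = 0 \<and> no_flat_step ys 0 \<and>
     length xs + length ys + 1 = n \<and> count_E xs + count_E ys = d \<and>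
     st_from xs 1 0 \<union> st_from ys (length xs + 2) 0 = J}"

lemma bij_betw_insert_N:
  assumes "d + card J < n"
  shows "bij_betw (\<lambda>(xs, ys). xs @ N # ys) (ground_splits n d J) {C \<in> Pnd n d. st C = J}"
proof (rule bij_betw_imageI)
  show "inj_on (\<lambda>(xs, ys). xs @ N # ys) (ground_splits n d J)"
    by (rule inj_on_subset[OF inj_on_insert_at_ground]) (auto simp: ground_splits_def)
  have "C \<in> (\<lambda>(xs, ys). xs @ N # ys) ` ground_splits n d J"
    if C: "C \<in> Pnd n d" "st C = J" for C
  proof -
    have "height C 0 + card J + d = n"
      using height_add_card_st_from[of C 0 1] C by (simp add: Pnd_def st_eq_st_from)
    with assms have "0 < height C 0"
      by linarith
    then obtain xs ys where "C = xs @ N # ys" "height xs 0 = 0" "no_flat_step ys 0"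
      by (rule split_at_last_up_step_from_ground)
    with C show ?thesis
      by (intro image_eqI[of _ _ "(xs, ys)"]) (auto simp: ground_splits_def Pnd_def st_insert_N_at_ground)
  qed
  then show "(\<lambda>(xs, ys). xs @ N # ys) ` ground_splits n d J = {C \<in> Pnd n d. st C = J}"
    by (auto simp: ground_splits_def Pnd_def st_insert_N_at_ground)
qed

lemma bij_betw_insert_E:
  assumes "card J \<le> d"
  shows "bij_betw (\<lambda>(xs, ys). xs @ E # ys) (ground_splits n d J) {C \<in> Pnd n (Suc d). st C = J}"
proof (rule bij_betw_imageI)
  show "inj_on (\<lambda>(xs, ys). xs @ E # ys) (ground_splits n d J)"
    by (rule inj_on_subset[OF inj_on_insert_at_ground]) (auto simp: ground_splits_def)
  have "C \<in> (\<lambda>(xs, ys). xs @ E # ys) ` ground_splits n d J"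
    if C: "C \<in> Pnd n (Suc d)" "st C = J" for C
  proof -
    have "\<not> no_flat_step C 0"
      using card_st_from_no_flat_step[of C 0 1] C assms by (auto simp: Pnd_def st_eq_st_from)
    then obtain xs ys where "C = xs @ E # ys" "height xs 0 = 0" "no_flat_step ys 0"
      by (rule split_at_last_flat_step)
    with C show ?thesis
      by (intro image_eqI[of _ _ "(xs, ys)"]) (auto simp: ground_splits_def Pnd_def st_insert_E_at_ground)
  qed
  then show "(\<lambda>(xs, ys). xs @ E # ys) ` ground_splits n d J = {C \<in> Pnd n (Suc d). st C = J}"
    by (auto simp: ground_splits_def Pnd_def st_insert_E_at_ground)
qed

theorem lemma4p13:
  fixes n d l :: nat and J :: "nat set"
  assumes "J \<subseteq> {1..n}" and "card J = l" and "l \<le> d" and "d < n - l"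
  shows "\<exists>f. bij_betw f {C \<in> Pnd n d. st C = J} {C' \<in> Pnd n (Suc d). st C' = J}"
proof -
  have insert_N: "bij_betw (\<lambda>(xs, ys). xs @ N # ys) (ground_splits n d J) {C \<in> Pnd n d. st C = J}"
    using assms(2,4) by (intro bij_betw_insert_N) linarith
  have insert_E: "bij_betw (\<lambda>(xs, ys). xs @ E # ys) (ground_splits n d J) {C \<in> Pnd n (Suc d). st C = J}"
    using assms(2,3) by (intro bij_betw_insert_E) simp
  show ?thesis
    using bij_betw_trans[OF bij_betw_the_inv_into[OF insert_N] insert_E] by blast
qed

end
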